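(* Let $U_3=(|0\rangle\langle0|\otimes I_2+|1\rangle\langle1|\otimes\sigma_1)\otimes I_2-2\,|1\rangle\langle1|\otimes|0\rangle\langle1|\otimes|1\rangle\langle1|$ and $U_6=(T_{AC}\otimes (I_2)_B)(H\otimes I_2\otimes I_2)U_3$, which equals $$\tfrac{1}{\sqrt2}\Big[|0\rangle\langle0|\otimes I_2\otimes I_2+|0\rangle\langle1|\otimes(\sigma_1\otimes I_2-2|0\rangle\langle1|\otimes|1\rangle\langle1|)+|1\rangle\langle0|\otimes I_2\otimes\sigma_1+|1\rangle\langle1|\otimes(2|0\rangle\langle1|\otimes|0\rangle\langle1|-\sigma_1\otimes\sigma_1)\Big].$$ Then $\mathrm{sr}(U_6)=6$.
   Context: $I_2$ is the $2\times 2$ identity, $\sigma_1=\begin{bmatrix}0&1\\1&0\end{bmatrix}$, $H=\frac{1}{\sqrt2}\begin{bmatrix}1&1\\1&-1\end{bmatrix}$, $\{|0\rangle,|1\rangle\}$ the standard basis of $\mathbb{C}^2$. $T=|0\rangle\langle0|\otimes I_2+|1\rangle\langle1|\otimes\sigma_1$ is the CNOT gate; $T_{AC}\otimes(I_2)_B$ denotes $T$ with control qubit $A$ and target qubit $C$, acting as identity on $B$. Tensor factors are ordered $A\otimes B\otimes C$. For a matrix $U$ on $\mathbb{C}^2\otimes\mathbb{C}^2\otimes\mathbb{C}^2$ (systems $A,B,C$), its Schmidt rank $\mathrm{sr}(U)$ is the least integer $r$ such that $U=\sum_{j=1}^r A_j\otimes B_j\otimes C_j$ with $A_j,B_j,C_j$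 complex $2\times 2$ matrices (i.e. the tensor rank of $U$). *)

theory Defs
  imports Complex_Main
begin

text \<open>Qubit basis states are indexed by bool: False = |0>, True = |1>.
  A 2x2 complex matrix is a function bool => bool => complex (row, column).
  An operator on C^2 (x) C^2 (x) C^2 (systems A,B,C in this order) is a
  function on triples of basis indices (a,b,c).\<close>

type_synonym mat2 = "bool \<Rightarrow> bool \<Rightarrow> complex"
type_synonym op3 = "bool \<times> bool \<times> bool \<Rightarrow> bool \<times> bool \<times> bool \<Rightarrow> complex"

definition ketbra :: "bool \<Rightarrow> bool \<Rightarrow> mat2" where
  "ketbra i j = (\<lambda>a b. if a = i \<and> b = j then 1 else 0)"

definition I2 :: mat2 where
  "I2 = (\<lambda>a b. if a = b then 1 else 0)"

definition sigma1 :: mat2 where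
  "sigma1 = (\<lambda>a b. if a \<noteq> b then 1 else 0)"

definition hadamard :: mat2 where
  "hadamard = (\<lambda>a b. (if a \<and> b then -1 else 1) / complex_of_real (sqrt 2))"

definition kron3 :: "mat2 \<Rightarrow> mat2 \<Rightarrow> mat2 \<Rightarrow> op3" where
  "kron3 A B C = (\<lambda>(a,b,c) (a',b',c'). A a a' * B b b' * C c c')"

definition op3_add :: "op3 \<Rightarrow> op3 \<Rightarrow> op3" where
  "op3_add M N = (\<lambda>i j. M i j + N i j)"

definition op3_scale :: "complex \<Rightarrow> op3 \<Rightarrow> op3" where
  "op3_scale s M = (\<lambda>i j. s * M i j)"

definition op3_mult :: "op3 \<Rightarrow> op3 \<Rightarrow> op3" where
  "op3_mult M N = (\<lambda>i j. \<Sum>k\<in>UNIV. M i k * N k j)"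

definition schmidt_rank :: "op3 \<Rightarrow> nat" where
  "schmidt_rank U = (LEAST r. \<exists>As Bs Cs :: nat \<Rightarrow> mat2.
      U = (\<lambda>i j. \<Sum>k<r. kron3 (As k) (Bs k) (Cs k) i j))"

definition T_AB_I :: op3 where
  "T_AB_I = op3_add (kron3 (ketbra False False) I2 I2) (kron3 (ketbra True True) sigma1 I2)"

definition T_AC_IB :: op3 where
  "T_AC_IB = op3_add (kron3 (ketbra False False) I2 I2) (kron3 (ketbra True True) I2 sigma1)"

definition U3 :: op3 where
  "U3 = op3_add T_AB_I
          (op3_scale (-2) (kron3 (ketbra True True) (ketbra False True) (ketbra True True)))"

definition U6 :: op3 where
  "U6 = op3_mult T_AC_IB (op3_mult (kron3 hadamard I2 I2) U3)"

end

theory Submission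
  imports Defs "HOL-Analysis.Cartesian_Space"
begin

text \<open>The upper bound 6 is read off the displayed six-term expansion of \<open>U6\<close>.
  For the lower bound take any decomposition \<open>U6 = \<Sum>k<r. A\<^sub>k \<otimes> B\<^sub>k \<otimes> C\<^sub>k\<close>. The first
  columns of the \<open>A\<^sub>k\<close> span \<open>\<complex>\<^sup>2\<close>: a functional vanishing on all of them would contract
  \<open>U6\<close> to zero, whereas the blocks of \<open>U6\<close> in the first A-column are \<open>I \<otimes> I\<close> and \<open>I \<otimes> \<sigma>\<^sub>1\<close>.
  So two of them, those of \<open>A\<^sub>k\<^sub>1\<close> and \<open>A\<^sub>k\<^sub>2\<close> say, are independent, and there are functionals
  on the A-factor that kill \<open>A\<^sub>k\<^sub>1\<close> and \<open>A\<^sub>k\<^sub>2\<close> while taking prescribed values on the second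
  column. Contracting \<open>U6\<close> with them and reading off the off-diagonal blocks of the B-factor
  yields operators on C that span all of \<open>\<complex>\<^sup>2\<^sup>\<times>\<^sup>2\<close>, but they lie in the span of the
  \<open>r - 2\<close> remaining \<open>C\<^sub>k\<close>; so \<open>r - 2 \<ge> 4\<close>.\<close>

definition tensor_sum :: "nat \<Rightarrow> (nat \<Rightarrow> mat2) \<Rightarrow> (nat \<Rightarrow> mat2) \<Rightarrow> (nat \<Rightarrow> mat2) \<Rightarrow> op3" where
  "tensor_sum r As Bs Cs = (\<lambda>i j. \<Sum>k<r. kron3 (As k) (Bs k) (Cs k) i j)"

lemma schmidt_rank_eqI:
  assumes "U = tensor_sum n As Bs Cs"
    and "\<And>r As Bs Cs. U = tensor_sum r As Bs Cs \<Longrightarrow> n \<le> r"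
  shows "schmidt_rank U = n"
  unfolding schmidt_rank_def using assms by (intro Least_equality) (auto simp: tensor_sum_def)

definition mat_pairing :: "mat2 \<Rightarrow> mat2 \<Rightarrow> complex" where
  "mat_pairing t A = (\<Sum>a\<in>UNIV. \<Sum>a'\<in>UNIV. t a a' * A a a')"

definition mat_vec :: "mat2 \<Rightarrow> complex^(bool \<times> bool)" where
  "mat_vec A = (\<chi> p. A (fst p) (snd p))"

definition contract_A :: "mat2 \<Rightarrow> op3 \<Rightarrow> bool \<Rightarrow> bool \<Rightarrow> complex^(bool \<times> bool)" where
  "contract_A t U b b' = (\<chi> p. \<Sum>a\<in>UNIV. \<Sum>a'\<in>UNIV. t a a' * U (a, b, fst p) (a', b', snd p))"

lemma contract_A_tensor_sum:
  "contract_A t (tensor_sum r As Bs Cs) b b'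
     = (\<Sum>k<r. (mat_pairing t (As k) * Bs k b b') *s mat_vec (Cs k))"
  by (simp add: vec_eq_iff contract_A_def tensor_sum_def kron3_def mat_pairing_def mat_vec_def
      sum_component UNIV_bool sum_distrib_left sum.distrib[symmetric] algebra_simps)

lemma contract_A_in_span:
  assumes "\<And>k. k \<in> K \<Longrightarrow> mat_pairing t (As k) = 0"
  shows "contract_A t (tensor_sum r As Bs Cs) b b' \<in> vec.span ((mat_vec \<circ> Cs) ` ({..<r} - K))"
proof -
  have "contract_A t (tensor_sum r As Bs Cs) b b'
      = (\<Sum>k\<in>{..<r} - K. (mat_pairing t (As k) * Bs k b b') *s mat_vec (Cs k))"
    unfolding contract_A_tensor_sum by (rule sum.mono_neutral_right) (auto simp: assms)
  also have "\<dots> \<in> vec.span ((mat_vec \<circ> Cs) ` ({..<r} - K))"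
    by (intro vec.span_sum vec.span_scale vec.span_base) auto
  finally show ?thesis .
qed

text \<open>The substitution method for tensor rank.\<close>
lemma tensor_sum_length_bound:
  assumes U: "U = tensor_sum r As Bs Cs" and K: "K \<subseteq> {..<r}"
    and kills: "\<And>t k. t \<in> T \<Longrightarrow> k \<in> K \<Longrightarrow> mat_pairing t (As k) = 0"
    and spans: "vec.span {contract_A t U b b' | t b b'. t \<in> T} = UNIV"
  shows "card K + 4 \<le> r"
proof -
  let ?S = "vec.span ((mat_vec \<circ> Cs) ` ({..<r} - K))"
  have "{contract_A t U b b' | t b b'. t \<in> T} \<subseteq> ?S"
    using contract_A_in_span kills unfolding U by blast
  then have "UNIV \<subseteq> ?S"
    unfolding spans[symmetric] by (intro vec.span_minimal vec.subspace_span)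
  then have "vec.dim (UNIV :: (complex^(bool \<times> bool)) set) \<le> card ((mat_vec \<circ> Cs) ` ({..<r} - K))"
    by (rule vec.dim_le_card) simp
  also have "\<dots> \<le> card ({..<r} - K)"
    by (rule card_image_le) simp
  also have "\<dots> = r - card K"
    using K by (simp add: card_Diff_subset finite_subset)
  finally show ?thesis
    using K card_mono[OF _ K] by (simp add: card_cart_basis)
qed

lemma exists_common_annihilator:
  fixes x y :: "'i \<Rightarrow> 'a::field"
  assumes "\<And>k l. k \<in> K \<Longrightarrow> l \<in> K \<Longrightarrow> x k * y l = y k * x l"
  shows "\<exists>c0 c1. (c0 \<noteq> 0 \<or> c1 \<noteq> 0) \<and> (\<forall>k\<in>K. c0 * x k + c1 * y k = 0)"
proof (cases "\<forall>k\<in>K. x k = 0 \<and> y k = 0")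
  case True
  then show ?thesis by (intro exI[of _ 1] exI[of _ 0]) auto
next
  case False
  then obtain k0 where "k0 \<in> K" "x k0 \<noteq> 0 \<or> y k0 \<noteq> 0" by auto
  then show ?thesis
    using assms[of k0] by (intro exI[of _ "y k0"] exI[of _ "- x k0"]) (auto simp: algebra_simps)
qed

lemma cramer_2x2:
  fixes a b c e u v :: "'a::field"
  assumes "a * e \<noteq> b * c"
  shows "\<exists>x y. x * a + y * b = u \<and> x * c + y * e = v"
proof -
  define D where "D = a * e - b * c"
  have "D \<noteq> 0" using assms by (simp add: D_def)
  then have "(u * e - v * b) / D * a + (a * v - c * u) / D * b = u"
    "(u * e - v * b) / D * c + (a * v - c * u) / D * e = v"
    by (simp_all add: field_simps) (simp_all add: D_def algebra_simps)
  then show ?thesis by blast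
qed

lemma exists_annihilator_prescribed_column:
  fixes A1 A2 :: mat2
  assumes "A1 False False * A2 True False \<noteq> A1 True False * A2 False False"
  shows "\<exists>t. t False True = p \<and> t True True = q \<and> mat_pairing t A1 = 0 \<and> mat_pairing t A2 = 0"
proof -
  obtain x y where
    "x * A1 False False + y * A1 True False = - (p * A1 False True + q * A1 True True)"
    "x * A2 False False + y * A2 True False = - (p * A2 False True + q * A2 True True)"
    using cramer_2x2[OF assms] by blast
  then show ?thesis
    by (intro exI[of _ "\<lambda>a a'. if a' then (if a then q else p) else (if a then y else x)"])
      (simp add: mat_pairing_def UNIV_bool algebra_simps)
qed

lemma sum_UNIV_bool_prod3:
  "(\<Sum>k\<in>UNIV. f k) = (\<Sum>a\<in>UNIV. \<Sum>b\<in>UNIV. \<Sum>c\<in>UNIV. f (a::bool, b::bool, c::bool))"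
  by (simp add: UNIV_Times_UNIV[symmetric] sum.cartesian_product del: UNIV_Times_UNIV)

lemma U6_eq: "U6 = op3_scale (1 / complex_of_real (sqrt 2))
           (op3_add (op3_add (op3_add
              (kron3 (ketbra False False) I2 I2)
              (op3_add (kron3 (ketbra False True) sigma1 I2)
                       (op3_scale (-2) (kron3 (ketbra False True) (ketbra False True) (ketbra True True)))))
              (kron3 (ketbra True False) I2 sigma1))
              (op3_add (op3_scale 2 (kron3 (ketbra True True) (ketbra False True) (ketbra False True)))
                       (op3_scale (-1) (kron3 (ketbra True True) sigma1 sigma1))))"
  by (intro ext) (auto simp: U6_def U3_def T_AB_I_def T_AC_IB_def op3_mult_def op3_add_def
      op3_scale_def kron3_def ketbra_def I2_def sigma1_def hadamard_def sum_UNIV_bool_prod3 UNIV_bool)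

lemma U6_entry:
  "U6 (a, b, c) (a', b', c') = 1 / complex_of_real (sqrt 2) *
     (if a' then
        if a then 2 * ketbra False True b b' * ketbra False True c c' - sigma1 b b' * sigma1 c c'
        else sigma1 b b' * I2 c c' - 2 * ketbra False True b b' * ketbra True True c c'
      else I2 b b' * (if a then sigma1 c c' else I2 c c'))"
  by (auto simp: U6_eq op3_scale_def op3_add_def kron3_def ketbra_def I2_def sigma1_def)

text \<open>The six terms of the expansion in \<open>U6_eq\<close>, with the scalars moved into the A-factors.\<close>
lemma U6_tensor_sum_6: "\<exists>As Bs Cs. U6 = tensor_sum 6 As Bs Cs"
proof -
  define s where "s = 1 / complex_of_real (sqrt 2)"
  let ?sc = "\<lambda>x (A :: mat2) a a'. x * A a a'"
  have "U6 = tensor_sum 6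
      ((!) [?sc s (ketbra False False), ?sc s (ketbra False True), ?sc (-2 * s) (ketbra False True),
            ?sc s (ketbra True False), ?sc (2 * s) (ketbra True True), ?sc (- s) (ketbra True True)])
      ((!) [I2, sigma1, ketbra False True, I2, ketbra False True, sigma1])
      ((!) [I2, I2, ketbra True True, sigma1, ketbra False True, sigma1])"
    by (intro ext) (auto simp: U6_eq s_def tensor_sum_def numeral_eq_Suc op3_scale_def op3_add_def
        kron3_def ketbra_def I2_def sigma1_def algebra_simps)
  then show ?thesis by blast
qed

lemma contract_A_U6_diagonal:
  "contract_A t U6 False False
     = (1 / complex_of_real (sqrt 2)) *s (t False False *s mat_vec I2 + t True False *s mat_vec sigma1)"
  by (simp add: vec_eq_iff contract_A_def mat_vec_def U6_entry UNIV_bool ketbra_def I2_def sigma1_def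
      algebra_simps)

lemma contract_A_U6_lower:
  "contract_A t U6 True False
     = (1 / complex_of_real (sqrt 2)) *s (t False True *s mat_vec I2 - t True True *s mat_vec sigma1)"
  by (simp add: vec_eq_iff contract_A_def mat_vec_def U6_entry UNIV_bool ketbra_def I2_def sigma1_def
      algebra_simps)

lemma contract_A_U6_upper:
  "contract_A t U6 False True
     = (1 / complex_of_real (sqrt 2)) *s
         (t False True *s (mat_vec I2 - 2 *s axis (True, True) 1)
          + t True True *s (2 *s axis (False, True) 1 - mat_vec sigma1))"
  by (simp add: vec_eq_iff contract_A_def mat_vec_def U6_entry UNIV_bool ketbra_def I2_def sigma1_def
      axis_def algebra_simps)

lemma U6_first_columns_independent:
  assumes "U6 = tensor_sum r As Bs Cs"
  shows "\<exists>k1<r. \<exists>k2<r. As k1 False False * As k2 True False \<noteq> As k1 True False * As k2 False False"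
proof (rule ccontr)
  assume "\<not> ?thesis"
  then obtain c0 c1 where c: "c0 \<noteq> 0 \<or> c1 \<noteq> 0"
    and kills: "\<forall>k\<in>{..<r}. c0 * As k False False + c1 * As k True False = 0"
    using exists_common_annihilator[of "{..<r}" "\<lambda>k. As k False False" "\<lambda>k. As k True False"] by auto
  define t :: mat2 where "t a a' = (if a' then 0 else if a then c1 else c0)" for a a'
  have "mat_pairing t (As k) = 0" if "k < r" for k
    using kills that by (simp add: mat_pairing_def t_def UNIV_bool)
  then have "contract_A t U6 False False = 0"
    unfolding assms contract_A_tensor_sum by simp
  then have "contract_A t U6 False False $ (False, False) = 0"
    "contract_A t U6 False False $ (False, True) = 0"
    by simp_all
  then show False
    using c by (simp add: contract_A_U6_diagonal t_def mat_vec_def I2_def sigma1_def)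
qed

lemma U6_offdiagonal_contractions_span:
  assumes "t1 False True = 1" "t1 True True = 0" "t2 False True = 0" "t2 True True = 1"
  shows "vec.span {contract_A t U6 b b' | t b b'. t \<in> {t1, t2}} = UNIV"
proof -
  let ?S = "vec.span {contract_A t U6 b b' | t b b'. t \<in> {t1, t2}}"
  define s where "s = 1 / complex_of_real (sqrt 2)"
  have "s \<noteq> 0" by (simp add: s_def)
  have contr: "contract_A t U6 b b' \<in> ?S" if "t \<in> {t1, t2}" for t b b'
    using that by (intro vec.span_base) blast
  have gen_eqs: "mat_vec I2 = (1 / s) *s contract_A t1 U6 True False"
    "axis (True, True) 1 = (1 / (2 * s)) *s (contract_A t1 U6 True False - contract_A t1 U6 False True)"
    "mat_vec sigma1 = (- 1 / s) *s contract_A t2 U6 True False"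
    "axis (False, True) 1 = (1 / (2 * s)) *s (contract_A t2 U6 False True - contract_A t2 U6 True False)"
    using \<open>s \<noteq> 0\<close> by (auto simp: vec_eq_iff contract_A_U6_lower contract_A_U6_upper assms
        s_def[symmetric] mat_vec_def axis_def I2_def sigma1_def field_simps)
  have gens: "mat_vec I2 \<in> ?S" "axis (True, True) 1 \<in> ?S"
    "mat_vec sigma1 \<in> ?S" "axis (False, True) 1 \<in> ?S"
    unfolding gen_eqs by (intro vec.span_scale vec.span_diff contr; simp)+
  have "axis (False, False) 1 = mat_vec I2 - axis (True, True) 1"
    "axis (True, False) 1 = mat_vec sigma1 - axis (False, True) 1"
    by (auto simp: vec_eq_iff mat_vec_def axis_def I2_def sigma1_def)
  then have "\<forall>a b. axis (a, b) 1 \<in> ?S"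
    using gens by (simp add: all_bool_eq vec.span_diff)
  then have "cart_basis \<subseteq> ?S"
    by (auto simp: cart_basis_def)
  then have "vec.span cart_basis \<subseteq> ?S"
    by (intro vec.span_minimal vec.subspace_span)
  then show ?thesis by auto
qed

lemma U6_tensor_sum_length_ge_6:
  assumes U: "U6 = tensor_sum r As Bs Cs"
  shows "6 \<le> r"
proof -
  obtain k1 k2 where k: "k1 < r" "k2 < r"
    and indep: "As k1 False False * As k2 True False \<noteq> As k1 True False * As k2 False False"
    using U6_first_columns_independent[OF U] by blast
  then have "k1 \<noteq> k2" by (auto simp: mult.commute)
  obtain t1 where t1: "t1 False True = 1" "t1 True True = 0"
    "mat_pairing t1 (As k1) = 0" "mat_pairing t1 (As k2) = 0"
    using exists_annihilator_prescribed_column[of "As k1" "As k2"] indep by blast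
  obtain t2 where t2: "t2 False True = 0" "t2 True True = 1"
    "mat_pairing t2 (As k1) = 0" "mat_pairing t2 (As k2) = 0"
    using exists_annihilator_prescribed_column[of "As k1" "As k2"] indep by blast
  have "card {k1, k2} + 4 \<le> r"
    using U k t1 t2 U6_offdiagonal_contractions_span[of t1 t2]
    by (intro tensor_sum_length_bound[of U6 r As Bs Cs "{k1, k2}" "{t1, t2}"]) auto
  with \<open>k1 \<noteq> k2\<close> show ?thesis by simp
qed

theorem mainTheorem16:
  shows "U6 = op3_scale (1 / complex_of_real (sqrt 2))
           (op3_add (op3_add (op3_add
              (kron3 (ketbra False False) I2 I2)
              (op3_add (kron3 (ketbra False True) sigma1 I2)
                       (op3_scale (-2) (kron3 (ketbra False True) (ketbra False True) (ketbra True True)))))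
              (kron3 (ketbra True False) I2 sigma1))
              (op3_add (op3_scale 2 (kron3 (ketbra True True) (ketbra False True) (ketbra False True)))
                       (op3_scale (-1) (kron3 (ketbra True True) sigma1 sigma1))))
         \<and> schmidt_rank U6 = 6"
proof (rule conjI[OF U6_eq])
  obtain As Bs Cs where "U6 = tensor_sum 6 As Bs Cs"
    using U6_tensor_sum_6 by blast
  then show "schmidt_rank U6 = 6"
    using U6_tensor_sum_length_ge_6 by (rule schmidt_rank_eqI)
qed

end
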